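(* Let $\mathcal H$ be a complex Hilbert space and let $\mathbf A=(A_1,\dots,A_m)$ be an $m$-tuple of bounded self-adjoint operators on $\mathcal H$. If $\Lambda_{\hat k}(\mathbf A)\neq\emptyset$ for some integer $\hat k>(m+1)/2$, then $\Lambda_1(\mathbf A)$ is star-shaped and contains $\operatorname{conv}\Lambda_{\hat k}(\mathbf A)$, and every element of $\operatorname{conv}\Lambda_{\hat k}(\mathbf A)$ is a star center of $\Lambda_1(\mathbf A)$.
   Context: For an $m$-tuple $\mathbf A=(A_1,\dots,A_m)$ of bounded self-adjoint operators on a complex Hilbert space $\mathcal H$ and a positive integer $k$, $\Lambda_k(\mathbf A)=\{(a_1,\dots,a_m)\in\mathbb R^m:$ there is an orthogonal projection $P$ of rank $k$ on $\mathcal H$ with $PA_jP=a_jP$ for $j=1,\dots,m\}$; $\Lambda_1(\mathbf A)=\{(\langle A_1x,x\rangle,\dots,\langle A_mx,x\rangle):\|x\|=1\}$ is the joint numerical range. A set $S\subseteq\mathbb R^m$ is star-shaped with star center $\mathbf c\in S$ if for every $\mathbf b\in S$ the segment joining $\mathbf c$ and $\mathbf b$ lies in $S$. $\operatorname{conv}$ denotes convex hull. *)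

theory Defs
  imports "HOL-Analysis.Analysis"
begin

class complex_vector = real_vector +
  fixes scaleC :: "complex \<Rightarrow> 'a \<Rightarrow> 'a" (infixr \<open>*\<^sub>C\<close> 75)
  assumes scaleC_add_right: "a *\<^sub>C (x + y) = a *\<^sub>C x + a *\<^sub>C y"
    and scaleC_add_left: "(a + b) *\<^sub>C x = a *\<^sub>C x + b *\<^sub>C x"
    and scaleC_scaleC: "a *\<^sub>C (b *\<^sub>C x) = (a * b) *\<^sub>C x"
    and scaleC_one: "1 *\<^sub>C x = x"
    and scaleR_scaleC: "r *\<^sub>R x = (complex_of_real r) *\<^sub>C x"

text \<open>Inner product: conjugate-linear in the first, linear in the second argument;
  the norm is the one induced by the inner product.\<close>
class complex_inner = complex_vector + real_normed_vector +
  fixes cinner :: "'a \<Rightarrow> 'a \<Rightarrow> complex"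
  assumes cinner_commute: "cinner x y = cnj (cinner y x)"
    and cinner_add_right: "cinner x (y + z) = cinner x y + cinner x z"
    and cinner_scaleC_right: "cinner x (c *\<^sub>C y) = c * cinner x y"
    and cinner_ge_zero: "0 \<le> Re (cinner x x)"
    and cinner_eq_zero_iff: "cinner x x = 0 \<longleftrightarrow> x = 0"
    and norm_eq_sqrt_cinner: "norm x = sqrt (Re (cinner x x))"

class chilbert_space = complex_inner + complete_space

definition bounded_clinear :: "('a::complex_inner \<Rightarrow> 'b::complex_inner) \<Rightarrow> bool" where
  "bounded_clinear f \<longleftrightarrow>
     (\<forall>x y. f (x + y) = f x + f y) \<and> (\<forall>c x. f (c *\<^sub>C x) = c *\<^sub>C f x) \<and>
     (\<exists>K. \<forall>x. norm (f x) \<le> norm x * K)"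

definition selfadjoint :: "('a::complex_inner \<Rightarrow> 'a) \<Rightarrow> bool" where
  "selfadjoint A \<longleftrightarrow> (\<forall>x y. cinner (A x) y = cinner x (A y))"

definition orth_proj :: "('a::complex_inner \<Rightarrow> 'a) \<Rightarrow> bool" where
  "orth_proj P \<longleftrightarrow> bounded_clinear P \<and> selfadjoint P \<and> P \<circ> P = P"

definition has_rank :: "('a::complex_inner \<Rightarrow> 'a) \<Rightarrow> nat \<Rightarrow> bool" where
  "has_rank P k \<longleftrightarrow> (\<exists>B. finite B \<and> card B = k \<and> B \<subseteq> range P \<and>
       \<not> module.dependent scaleC B \<and> module.span scaleC B = range P)"

definition rank_k_nr ::
  "nat \<Rightarrow> ('m::finite \<Rightarrow> 'a::complex_inner \<Rightarrow> 'a) \<Rightarrow> (real ^ 'm) set" where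
  "rank_k_nr k A = {a. \<exists>P. orth_proj P \<and> has_rank P k \<and>
       (\<forall>j. (\<lambda>x. P (A j (P x))) = (\<lambda>x. complex_of_real (a $ j) *\<^sub>C P x))}"

definition star_center :: "'v::real_vector \<Rightarrow> 'v set \<Rightarrow> bool" where
  "star_center c S \<longleftrightarrow> c \<in> S \<and> (\<forall>b\<in>S. closed_segment c b \<subseteq> S)"

definition star_shaped :: "'v::real_vector set \<Rightarrow> bool" where
  "star_shaped S \<longleftrightarrow> (\<exists>c. star_center c S)"

end

theory Submission
  imports Defs
begin

text \<open>
  Let \<open>c \<in> \<Lambda>\<^sub>k(A)\<close> with \<open>2k > m + 1\<close>, realised by a rank-\<open>k\<close> projection \<open>P\<close>, and let
  \<open>b \<in> \<Lambda>\<^sub>1(A)\<close> be realised by a unit vector \<open>x\<close>. The range of \<open>P\<close> has real dimension \<open>2k\<close>,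
  so the \<open>m + 1\<close> real-linear conditions \<open>Re \<langle>x, y\<rangle> = 0\<close>, \<open>Re \<langle>A\<^sub>j x, y\<rangle> = 0\<close> have a unit
  solution \<open>y\<close> there, and \<open>\<langle>A\<^sub>j y, y\<rangle> = c\<^sub>j\<close> since \<open>P A\<^sub>j P = c\<^sub>j P\<close>. For
  \<open>z = \<surd>(1 - t) y + \<surd>t x\<close> all cross terms vanish, so \<open>\<langle>A\<^sub>j z, z\<rangle> = (1 - t) c\<^sub>j + t b\<^sub>j\<close>:
  the whole segment from \<open>c\<close> to \<open>b\<close> lies in \<open>\<Lambda>\<^sub>1(A)\<close>. Hence every point of \<open>\<Lambda>\<^sub>k(A)\<close> is a
  star center of \<open>\<Lambda>\<^sub>1(A)\<close>, and the star centers of any set form a convex set.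
\<close>

lemma vector_space_scaleC: "vector_space (scaleC :: complex \<Rightarrow> 'a::complex_vector \<Rightarrow> 'a)"
  by unfold_locales (auto simp: scaleC_add_right scaleC_add_left scaleC_scaleC scaleC_one)

lemma module_scaleC: "module (scaleC :: complex \<Rightarrow> 'a::complex_vector \<Rightarrow> 'a)"
  by unfold_locales (auto simp: scaleC_add_right scaleC_add_left scaleC_scaleC scaleC_one)

lemma cinner_scaleC_left: "cinner (c *\<^sub>C x) y = cnj c * cinner (x::'a::complex_inner) y"
  by (metis cinner_commute cinner_scaleC_right complex_cnj_mult)

lemma cinner_add_left: "cinner (x + y) z = cinner x z + cinner (y::'a::complex_inner) z"
  by (metis cinner_commute cinner_add_right complex_cnj_add)

lemma cinner_diff_right: "cinner x (y - z) = cinner x y - cinner (x::'a::complex_inner) z"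
  by (metis cinner_add_right eq_diff_eq)

lemma cinner_diff_left: "cinner (x - y) z = cinner x z - cinner (y::'a::complex_inner) z"
  by (metis cinner_add_left eq_diff_eq)

lemma cinner_zero_right [simp]: "cinner x (0::'a::complex_inner) = 0"
  by (metis add_cancel_right_right cinner_add_right add_0)

lemma cinner_sum_right: "cinner w (sum h S) = (\<Sum>s\<in>S. cinner (w::'a::complex_inner) (h s))"
  by (induction S rule: infinite_finite_induct) (simp_all add: cinner_add_right)

lemma cinner_self_eq_norm_power2: "cinner x x = complex_of_real ((norm (x::'a::complex_inner))\<^sup>2)"
proof -
  have "Im (cinner x x) = 0"
    by (metis cinner_commute cnj.sel(2) neg_equal_zero)
  moreover have "Re (cinner x x) = (norm x)\<^sup>2"
    using norm_eq_sqrt_cinner[of x] cinner_ge_zero[of x] by simp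
  ultimately show ?thesis by (simp add: complex_eq_iff)
qed

lemma cinner_self_eq_1: "norm (x::'a::complex_inner) = 1 \<Longrightarrow> cinner x x = 1"
  by (simp add: cinner_self_eq_norm_power2)

lemma norm_eq_1_of_cinner_self: "cinner x x = 1 \<Longrightarrow> norm (x::'a::complex_inner) = 1"
  by (simp add: norm_eq_sqrt_cinner)

lemma norm_scaleC: "norm (c *\<^sub>C x) = cmod c * norm (x::'a::complex_inner)"
proof -
  have "complex_of_real ((norm (c *\<^sub>C x))\<^sup>2) = cinner (c *\<^sub>C x) (c *\<^sub>C x)"
    by (rule cinner_self_eq_norm_power2[symmetric])
  also have "\<dots> = (cnj c * c) * cinner x x"
    by (simp add: cinner_scaleC_left cinner_scaleC_right mult.assoc)
  also have "\<dots> = complex_of_real ((cmod c)\<^sup>2) * complex_of_real ((norm x)\<^sup>2)"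
    by (simp only: cinner_self_eq_norm_power2 complex_norm_square mult.commute)
  finally have "(norm (c *\<^sub>C x))\<^sup>2 = (cmod c * norm x)\<^sup>2"
    by (metis of_real_eq_iff of_real_mult power_mult_distrib)
  then show ?thesis
    by simp
qed

lemma norm_normalize_scaleC:
  "(x::'a::complex_inner) \<noteq> 0 \<Longrightarrow> norm (complex_of_real (1 / norm x) *\<^sub>C x) = 1"
  by (simp add: norm_scaleC norm_divide)

lemma cmod_cinner_le_norm:
  assumes "norm (z::'a::complex_inner) = 1"
  shows "cmod (cinner z v) \<le> norm v"
proof -
  define a where "a = cinner z v"
  have "cinner (v - a *\<^sub>C z) (v - a *\<^sub>C z) = cinner v v - (a * cnj a + cnj a * a) + cnj a * a * cinner z z"
    unfolding cinner_diff_left cinner_diff_right cinner_scaleC_left cinner_scaleC_right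
      cinner_commute[of v z] a_def[symmetric]
    by (simp add: right_diff_distrib left_diff_distrib mult.commute mult.left_commute)
  also have "\<dots> = complex_of_real ((norm v)\<^sup>2 - (cmod a)\<^sup>2)"
    by (simp add: assms cinner_self_eq_norm_power2 flip: complex_norm_square)
  finally have "(cmod a)\<^sup>2 \<le> (norm v)\<^sup>2"
    using cinner_ge_zero[of "v - a *\<^sub>C z"] by simp
  then show ?thesis
    unfolding a_def using power2_le_imp_le norm_ge_zero by blast
qed

lemma bounded_clinear_add: "bounded_clinear f \<Longrightarrow> f (x + y) = f x + f y"
  unfolding bounded_clinear_def by blast

lemma bounded_clinear_scaleC: "bounded_clinear f \<Longrightarrow> f (c *\<^sub>C x) = c *\<^sub>C f x"
  unfolding bounded_clinear_def by blast

lemma bounded_clinear_zero: "bounded_clinear f \<Longrightarrow> f 0 = 0"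
  by (metis add_cancel_right_right add_0 bounded_clinear_add)

lemma bounded_clinear_sum: "bounded_clinear f \<Longrightarrow> f (sum h S) = (\<Sum>s\<in>S. f (h s))"
  by (induction S rule: infinite_finite_induct) (simp_all add: bounded_clinear_zero bounded_clinear_add)

lemma bounded_clinear_ident: "bounded_clinear (\<lambda>x::'a::complex_inner. x)"
  unfolding bounded_clinear_def by (intro conjI allI exI[of _ 1]) auto

lemma selfadjoint_ident: "selfadjoint (\<lambda>x::'a::complex_inner. x)"
  unfolding selfadjoint_def by simp

lemma cinner_selfadjoint_real:
  assumes "selfadjoint B"
  shows "cinner z (B z) = complex_of_real (Re (cinner z (B z)))"
proof -
  have "cinner z (B z) = cnj (cinner z (B z))"
    using assms unfolding selfadjoint_def by (metis cinner_commute)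
  then have "Im (cinner z (B z)) = 0"
    by (metis cnj.sel(2) neg_equal_zero)
  then show ?thesis by (simp add: complex_eq_iff)
qed

lemma cinner_selfadjoint_cross_eq_0:
  assumes "selfadjoint B" "Re (cinner (B x) y) = 0"
  shows "cinner y (B x) + cinner x (B y) = 0"
proof -
  have "cinner x (B y) = cinner (B x) y"
    using assms(1) unfolding selfadjoint_def by simp
  then show ?thesis
    using assms(2) cinner_commute[of y "B x"] by (simp add: complex_eq_iff)
qed

lemma cinner_real_combination:
  fixes x y :: "'a::complex_inner"
  assumes "bounded_clinear B"
  shows "cinner (complex_of_real a *\<^sub>C y + complex_of_real b *\<^sub>C x)
                (B (complex_of_real a *\<^sub>C y + complex_of_real b *\<^sub>C x))
       = complex_of_real (a * a) * cinner y (B y) + complex_of_real (b * b) * cinner x (B x)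
         + complex_of_real (a * b) * (cinner y (B x) + cinner x (B y))"
  using assms
  by (simp add: bounded_clinear_add bounded_clinear_scaleC cinner_add_left cinner_add_right
      cinner_scaleC_left cinner_scaleC_right algebra_simps)

lemma orth_proj_fixes_range: "orth_proj P \<Longrightarrow> u \<in> range P \<Longrightarrow> P u = u"
  unfolding orth_proj_def by (metis comp_apply rangeE)

lemma orth_proj_compression_cinner:
  assumes "orth_proj P" "(\<lambda>x. P (A (P x))) = (\<lambda>x. c *\<^sub>C P x)" "P y = y"
  shows "cinner y (A y) = c * cinner y y"
proof -
  have "cinner y (A y) = cinner (P y) (A (P y))"
    using assms(3) by simp
  also have "\<dots> = cinner y (P (A (P y)))"
    using assms(1) unfolding orth_proj_def selfadjoint_def by blast
  also have "\<dots> = cinner y (c *\<^sub>C P y)"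
    using assms(2) by metis
  finally show ?thesis
    using assms(3) by (simp add: cinner_scaleC_right)
qed

lemma has_rank_basis:
  assumes "orth_proj P" "has_rank P k"
  obtains B where "finite B" "card B = k" "\<And>u. u \<in> B \<Longrightarrow> P u = u"
    "\<not> module.dependent scaleC B"
proof -
  obtain B where "finite B" "card B = k" "B \<subseteq> range P" "\<not> module.dependent scaleC B"
    using assms(2) unfolding has_rank_def by blast
  then show ?thesis
    using that orth_proj_fixes_range[OF assms(1)] by blast
qed

lemma has_rank_obtain_unit:
  assumes "orth_proj P" "has_rank P k" "k \<ge> 1"
  obtains y :: "'a::complex_inner" where "norm y = 1" "P y = y"
proof -
  obtain B where B: "finite B" "card B = k" "\<And>u. u \<in> B \<Longrightarrow> P u = u"
      "\<not> module.dependent scaleC B"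
    using has_rank_basis[OF assms(1,2)] by blast
  have "B \<noteq> {}"
    using B(2) assms(3) by auto
  then obtain u where u: "u \<in> B"
    by blast
  have "u \<noteq> 0"
    using module.dependent_zero[OF module_scaleC] B(4) u by blast
  moreover have "P (complex_of_real (1 / norm u) *\<^sub>C u) = complex_of_real (1 / norm u) *\<^sub>C u"
    using assms(1) B(3)[OF u] unfolding orth_proj_def by (simp add: bounded_clinear_scaleC)
  ultimately show ?thesis
    using that norm_normalize_scaleC by blast
qed

lemma orth_proj_rank_1:
  fixes z :: "'a::complex_inner"
  assumes z: "norm z = 1"
  shows "orth_proj (\<lambda>v. cinner z v *\<^sub>C z)"
  unfolding orth_proj_def
proof (intro conjI)
  show "bounded_clinear (\<lambda>v. cinner z v *\<^sub>C z)"
    unfolding bounded_clinear_def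
  proof (intro conjI allI exI)
    fix x y show "cinner z (x + y) *\<^sub>C z = cinner z x *\<^sub>C z + cinner z y *\<^sub>C z"
      by (simp add: cinner_add_right scaleC_add_left)
  next
    fix c x show "cinner z (c *\<^sub>C x) *\<^sub>C z = c *\<^sub>C cinner z x *\<^sub>C z"
      by (simp add: cinner_scaleC_right scaleC_scaleC)
  next
    fix x show "norm (cinner z x *\<^sub>C z) \<le> norm x * 1"
      using cmod_cinner_le_norm[OF z, of x] by (simp add: norm_scaleC z)
  qed
  show "selfadjoint (\<lambda>v. cinner z v *\<^sub>C z)"
    unfolding selfadjoint_def cinner_scaleC_left cinner_scaleC_right
    by (metis cinner_commute mult.commute)
  show "(\<lambda>v. cinner z v *\<^sub>C z) \<circ> (\<lambda>v. cinner z v *\<^sub>C z) = (\<lambda>v. cinner z v *\<^sub>C z)"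
    by (rule ext) (simp add: cinner_scaleC_right scaleC_scaleC cinner_self_eq_1[OF z])
qed

lemma has_rank_rank_1:
  fixes z :: "'a::complex_inner"
  assumes z: "norm z = 1"
  shows "has_rank (\<lambda>v. cinner z v *\<^sub>C z) 1"
proof -
  have Q_scaleC: "cinner z (k *\<^sub>C z) *\<^sub>C z = k *\<^sub>C z" for k
    by (simp add: cinner_scaleC_right cinner_self_eq_1[OF z])
  have "range (\<lambda>v. cinner z v *\<^sub>C z) = range (\<lambda>k. k *\<^sub>C z)"
  proof
    show "range (\<lambda>v. cinner z v *\<^sub>C z) \<subseteq> range (\<lambda>k. k *\<^sub>C z)"
      by blast
    show "range (\<lambda>k. k *\<^sub>C z) \<subseteq> range (\<lambda>v. cinner z v *\<^sub>C z)"
    proof (rule image_subsetI)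
      fix k :: complex
      show "k *\<^sub>C z \<in> range (\<lambda>v. cinner z v *\<^sub>C z)"
        by (subst Q_scaleC[of k, symmetric]) (rule rangeI)
    qed
  qed
  then have "module.span scaleC {z} = range (\<lambda>v. cinner z v *\<^sub>C z)"
    by (simp only: module.span_singleton[OF module_scaleC])
  moreover have "z \<in> range (\<lambda>v. cinner z v *\<^sub>C z)"
    by (rule range_eqI[of _ _ z]) (simp add: cinner_self_eq_1[OF z] scaleC_one)
  moreover have "\<not> module.dependent scaleC {z}"
  proof -
    have "z \<noteq> 0"
      using z by auto
    then show ?thesis
      by (simp only: vector_space.dependent_single[OF vector_space_scaleC] not_False_eq_True)
  qed
  ultimately show ?thesis
    unfolding has_rank_def by (intro exI[of _ "{z}"] conjI) auto
qed

definition joint_form :: "('m::finite \<Rightarrow> 'a::complex_inner \<Rightarrow> 'a) \<Rightarrow> 'a \<Rightarrow> real ^ 'm" where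
  "joint_form A z = (\<chi> j. Re (cinner z (A j z)))"

lemma joint_form_in_rank_1_nr:
  fixes A :: "'m::finite \<Rightarrow> 'a::complex_inner \<Rightarrow> 'a"
  assumes z: "norm z = 1" and A: "\<forall>j. bounded_clinear (A j) \<and> selfadjoint (A j)"
  shows "joint_form A z \<in> rank_k_nr 1 A"
proof -
  define Q where "Q = (\<lambda>v. cinner z v *\<^sub>C z)"
  have "(\<lambda>x. Q (A j (Q x))) = (\<lambda>x. complex_of_real (joint_form A z $ j) *\<^sub>C Q x)" for j
  proof
    fix x
    have "Q (A j (Q x)) = (cinner z x * cinner z (A j z)) *\<^sub>C z"
      using A by (simp add: Q_def bounded_clinear_scaleC cinner_scaleC_right)
    also have "\<dots> = complex_of_real (joint_form A z $ j) *\<^sub>C Q x"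
      using A cinner_selfadjoint_real[of "A j" z]
      by (simp add: Q_def joint_form_def scaleC_scaleC mult.commute)
    finally show "Q (A j (Q x)) = complex_of_real (joint_form A z $ j) *\<^sub>C Q x" .
  qed
  then show ?thesis
    using orth_proj_rank_1[OF z] has_rank_rank_1[OF z] unfolding rank_k_nr_def Q_def by blast
qed

lemma joint_form_eq_on_compression_range:
  assumes "orth_proj P" "\<forall>j. (\<lambda>x. P (A j (P x))) = (\<lambda>x. complex_of_real (c $ j) *\<^sub>C P x)"
    and "P y = y" "norm y = 1"
  shows "joint_form A y = c"
  using orth_proj_compression_cinner[OF assms(1) _ assms(3)] assms(2) cinner_self_eq_1[OF assms(4)]
  by (simp add: joint_form_def vec_eq_iff)

lemma rank_k_nr_subset_rank_1_nr:
  fixes A :: "'m::finite \<Rightarrow> 'a::complex_inner \<Rightarrow> 'a"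
  assumes A: "\<forall>j. bounded_clinear (A j) \<and> selfadjoint (A j)" and k: "k \<ge> 1"
  shows "rank_k_nr k A \<subseteq> rank_k_nr 1 A"
proof
  fix c assume "c \<in> rank_k_nr k A"
  then obtain P where P: "orth_proj P" "has_rank P k"
      "\<forall>j. (\<lambda>x. P (A j (P x))) = (\<lambda>x. complex_of_real (c $ j) *\<^sub>C P x)"
    unfolding rank_k_nr_def by blast
  obtain y where "norm y = 1" "P y = y"
    using has_rank_obtain_unit[OF P(1,2) k] .
  then show "c \<in> rank_k_nr 1 A"
    using joint_form_in_rank_1_nr[OF _ A] joint_form_eq_on_compression_range[OF P(1,3)] by metis
qed

lemma euclidean_family_dependent:
  fixes g :: "'i \<Rightarrow> 'v::euclidean_space"
  assumes fin: "finite I" and card: "card I > DIM('v)"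
  obtains r where "(\<Sum>i\<in>I. r i *\<^sub>R g i) = 0" "\<exists>i\<in>I. r i \<noteq> 0"
proof (cases "inj_on g I")
  case True
  have "dependent (g ` I)"
    using True card by (intro dependent_biggerset) (simp add: card_image)
  then obtain t u where t: "finite t" "t \<subseteq> g ` I" "(\<Sum>v\<in>t. u v *\<^sub>R v) = 0" "\<exists>v\<in>t. u v \<noteq> 0"
    unfolding dependent_explicit by blast
  define J where "J = {i\<in>I. g i \<in> t}"
  have "g ` J = t" "inj_on g J"
    using t(2) True by (auto simp: J_def inj_on_def)
  then have "(\<Sum>i\<in>J. u (g i) *\<^sub>R g i) = 0"
    using t(3) sum.reindex[of g J "\<lambda>v. u v *\<^sub>R v"] by simp
  moreover have "(\<Sum>i\<in>I. (if g i \<in> t then u (g i) else 0) *\<^sub>R g i) = (\<Sum>i\<in>J. u (g i) *\<^sub>R g i)"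
    by (rule sum.mono_neutral_cong_right) (auto simp: J_def fin)
  moreover have "\<exists>i\<in>I. (if g i \<in> t then u (g i) else 0) \<noteq> 0"
    using t(2,4) by fastforce
  ultimately show ?thesis
    using that by auto
next
  case False
  then obtain i i' where ii: "i \<in> I" "i' \<in> I" "i \<noteq> i'" "g i = g i'"
    unfolding inj_on_def by blast
  define r where "r l = (if l = i then 1 else if l = i' then -1 else (0::real))" for l
  have "(\<Sum>l\<in>I. r l *\<^sub>R g l) = (\<Sum>l\<in>{i, i'}. r l *\<^sub>R g l)"
    by (rule sum.mono_neutral_cong_right) (use ii fin in \<open>auto simp: r_def\<close>)
  also have "\<dots> = 0"
    using ii by (simp add: r_def)
  finally have "(\<Sum>l\<in>I. r l *\<^sub>R g l) = 0" .
  moreover have "r i \<noteq> 0"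
    by (simp add: r_def)
  ultimately show ?thesis
    using that ii(1) by blast
qed

text \<open>The range of a rank-\<open>k\<close> projection has real dimension \<open>2k\<close>; writing \<open>y = \<Sum>\<^sub>u c\<^sub>u u\<close> over a
  complex basis, \<open>Re \<langle>w, y\<rangle>\<close> is real-linear in the \<open>2k\<close> real coordinates \<open>Re c\<^sub>u, Im c\<^sub>u\<close>,
  indexed below by \<open>B \<times> bool\<close>.\<close>

lemma exists_unit_in_range_Re_cinner_eq_0:
  fixes w :: "'i::finite \<Rightarrow> 'a::complex_inner"
  assumes P: "orth_proj P" "has_rank P k" and k: "CARD('i) < 2 * k"
  obtains y where "norm y = 1" "P y = y" "\<And>i. Re (cinner (w i) y) = 0"
proof -
  obtain B where B: "finite B" "card B = k" "\<And>u. u \<in> B \<Longrightarrow> P u = u"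
      "\<not> module.dependent scaleC B"
    using has_rank_basis[OF P] by blast
  define I where "I = B \<times> (UNIV :: bool set)"
  define f :: "'a \<Rightarrow> 'a \<Rightarrow> bool \<Rightarrow> real"
    where "f v u b = (if b then - Im (cinner v u) else Re (cinner v u))" for v u b
  define g :: "'a \<times> bool \<Rightarrow> real ^ 'i"
    where "g p = (\<chi> i. f (w i) (fst p) (snd p))" for p
  have "finite I" "card I > DIM(real ^ 'i)"
    using B(1,2) k by (simp_all add: I_def card_cartesian_product)
  then obtain r where r: "(\<Sum>p\<in>I. r p *\<^sub>R g p) = 0" "\<exists>p\<in>I. r p \<noteq> 0"
    by (rule euclidean_family_dependent)
  define c where "c u = Complex (r (u, False)) (r (u, True))" for u
  define y where "y = (\<Sum>u\<in>B. c u *\<^sub>C u)"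
  have Re_cinner_y: "Re (cinner v y) = (\<Sum>p\<in>I. r p * f v (fst p) (snd p))" for v
  proof -
    have "Re (cinner v y) = (\<Sum>u\<in>B. Re (c u * cinner v u))"
      unfolding y_def cinner_sum_right cinner_scaleC_right Re_sum ..
    also have "\<dots> = (\<Sum>u\<in>B. \<Sum>b\<in>UNIV. r (u, b) * f v u b)"
      by (rule sum.cong) (simp_all add: c_def f_def UNIV_bool)
    also have "\<dots> = (\<Sum>p\<in>I. r p * f v (fst p) (snd p))"
      unfolding I_def sum.cartesian_product by (simp add: case_prod_beta')
    finally show ?thesis .
  qed
  have y_orth: "Re (cinner (w i) y) = 0" for i
  proof -
    have "(\<Sum>p\<in>I. r p *\<^sub>R g p) $ i = 0"
      using r(1) by simp
    then show ?thesis
      unfolding Re_cinner_y sum_component by (simp add: g_def)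
  qed
  have "y \<noteq> 0"
  proof
    assume "y = 0"
    then have "c u = 0" if "u \<in> B" for u
      using module.independentD[OF module_scaleC B(4) B(1) order_refl, of c u] that y_def by simp
    then have "r p = 0" if "p \<in> I" for p
      using that unfolding I_def c_def by (cases p; cases "snd p") (auto simp: complex_eq_iff)
    then show False
      using r(2) by blast
  qed
  moreover have "P y = y"
    using P(1) B(3) unfolding y_def orth_proj_def by (simp add: bounded_clinear_sum bounded_clinear_scaleC)
  ultimately show ?thesis
  proof (intro that[of "complex_of_real (1 / norm y) *\<^sub>C y"])
    show "P (complex_of_real (1 / norm y) *\<^sub>C y) = complex_of_real (1 / norm y) *\<^sub>C y"
      using P(1) \<open>P y = y\<close> unfolding orth_proj_def by (simp add: bounded_clinear_scaleC)
    show "Re (cinner (w i) (complex_of_real (1 / norm y) *\<^sub>C y)) = 0" for i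
      using y_orth[of i] by (simp add: cinner_scaleC_right)
  qed (rule norm_normalize_scaleC)
qed

lemma joint_form_Re_orthogonal_combination:
  fixes A :: "'m::finite \<Rightarrow> 'a::complex_inner \<Rightarrow> 'a"
  assumes A: "\<forall>j. bounded_clinear (A j) \<and> selfadjoint (A j)"
    and x: "norm x = 1" and y: "norm y = 1"
    and orth: "Re (cinner x y) = 0" "\<And>j. Re (cinner (A j x) y) = 0"
    and t: "0 \<le> t" "t \<le> 1"
  defines "z \<equiv> complex_of_real (sqrt (1 - t)) *\<^sub>C y + complex_of_real (sqrt t) *\<^sub>C x"
  shows "norm z = 1" "joint_form A z = (1 - t) *\<^sub>R joint_form A y + t *\<^sub>R joint_form A x"
proof -
  have roots: "sqrt (1 - t) * sqrt (1 - t) = 1 - t" "sqrt t * sqrt t = t"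
    using t by simp_all
  have "cinner z z = complex_of_real (1 - t) + complex_of_real t"
    using cinner_real_combination[OF bounded_clinear_ident, of "sqrt (1 - t)" y "sqrt t" x]
      cinner_selfadjoint_cross_eq_0[OF selfadjoint_ident, of x y] orth(1)
      cinner_self_eq_1[OF x] cinner_self_eq_1[OF y] roots
    unfolding z_def by simp
  then show "norm z = 1"
    by (intro norm_eq_1_of_cinner_self) simp
  have "cinner z (A j z) = complex_of_real (1 - t) * cinner y (A j y) + complex_of_real t * cinner x (A j x)"
    for j
    using cinner_real_combination[of "A j" "sqrt (1 - t)" y "sqrt t" x]
      cinner_selfadjoint_cross_eq_0[of "A j" x y] A orth(2) roots
    unfolding z_def by simp
  then show "joint_form A z = (1 - t) *\<^sub>R joint_form A y + t *\<^sub>R joint_form A x"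
    by (simp add: joint_form_def vec_eq_iff)
qed

lemma closed_segment_subset_rank_1_nr:
  fixes A :: "'m::finite \<Rightarrow> 'a::complex_inner \<Rightarrow> 'a"
  assumes A: "\<forall>j. bounded_clinear (A j) \<and> selfadjoint (A j)" and k: "CARD('m) + 1 < 2 * k"
    and c: "c \<in> rank_k_nr k A" and b: "b \<in> rank_k_nr 1 A"
  shows "closed_segment c b \<subseteq> rank_k_nr 1 A"
proof
  fix p assume "p \<in> closed_segment c b"
  then obtain t where t: "0 \<le> t" "t \<le> 1" "p = (1 - t) *\<^sub>R c + t *\<^sub>R b"
    unfolding closed_segment_def by blast
  obtain P where P: "orth_proj P" "has_rank P k"
      "\<forall>j. (\<lambda>x. P (A j (P x))) = (\<lambda>x. complex_of_real (c $ j) *\<^sub>C P x)"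
    using c unfolding rank_k_nr_def by blast
  obtain Q where Q: "orth_proj Q" "has_rank Q 1"
      "\<forall>j. (\<lambda>x. Q (A j (Q x))) = (\<lambda>x. complex_of_real (b $ j) *\<^sub>C Q x)"
    using b unfolding rank_k_nr_def by blast
  obtain x where x: "norm x = 1" "Q x = x"
    using has_rank_obtain_unit[OF Q(1,2)] by auto
  obtain y where y: "norm y = 1" "P y = y"
      "\<And>i. Re (cinner (case i of None \<Rightarrow> x | Some j \<Rightarrow> A j x) y) = 0"
    using exists_unit_in_range_Re_cinner_eq_0[OF P(1,2), of "case_option x (\<lambda>j. A j x)"] k
    by auto
  have "Re (cinner x y) = 0" "\<And>j. Re (cinner (A j x) y) = 0"
    using y(3)[of None] y(3)[of "Some _"] by simp_all
  from joint_form_Re_orthogonal_combination[OF A x(1) y(1) this t(1,2)]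
  show "p \<in> rank_k_nr 1 A"
    using joint_form_in_rank_1_nr[OF _ A] t(3)
      joint_form_eq_on_compression_range[OF P(1,3) y(2,1)]
      joint_form_eq_on_compression_range[OF Q(1,3) x(2,1)]
    by metis
qed

lemma star_center_rank_1_nr:
  fixes A :: "'m::finite \<Rightarrow> 'a::complex_inner \<Rightarrow> 'a"
  assumes A: "\<forall>j. bounded_clinear (A j) \<and> selfadjoint (A j)" and k: "CARD('m) + 1 < 2 * k"
    and c: "c \<in> rank_k_nr k A"
  shows "star_center c (rank_k_nr 1 A)"
  using rank_k_nr_subset_rank_1_nr[OF A, of k] c k closed_segment_subset_rank_1_nr[OF A k c]
  unfolding star_center_def by auto

lemma convex_star_centers: "convex {c. star_center c S}"
  unfolding convex_contains_segment
proof (intro ballI subsetI CollectI)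
  fix c1 c2 c assume c1: "c1 \<in> {c. star_center c S}" and c2: "c2 \<in> {c. star_center c S}"
    and c: "c \<in> closed_segment c1 c2"
  then have "c1 \<in> S" "c \<in> S"
    unfolding star_center_def by blast+
  moreover have "p \<in> S" if b: "b \<in> S" and p: "p \<in> closed_segment c b" for b p
  proof -
    have "c \<in> convex hull {c1, c2, b}" "b \<in> convex hull {c1, c2, b}"
      using c hull_mono[of "{c1, c2}" "{c1, c2, b}" "convex"]
      by (auto simp: segment_convex_hull hull_inc)
    then have "p \<in> convex hull (insert c1 {c2, b})"
      using p convex_contains_segment convex_convex_hull by blast
    then obtain q where "q \<in> closed_segment c2 b" "p \<in> closed_segment c1 q"
      unfolding convex_hull_insert_segments segment_convex_hull[symmetric] by auto
    then show "p \<in> S"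
      using c1 c2 b unfolding star_center_def by blast
  qed
  ultimately show "star_center c S"
    unfolding star_center_def by blast
qed

theorem theorem3p6:
  fixes A :: "'m::finite \<Rightarrow> 'a::chilbert_space \<Rightarrow> 'a" and khat :: nat
  assumes "\<forall>j. bounded_clinear (A j) \<and> selfadjoint (A j)"
    and "real khat > (real CARD('m) + 1) / 2"
    and "rank_k_nr khat A \<noteq> {}"
  shows "star_shaped (rank_k_nr 1 A) \<and>
         convex hull (rank_k_nr khat A) \<subseteq> rank_k_nr 1 A \<and>
         (\<forall>c \<in> convex hull (rank_k_nr khat A). star_center c (rank_k_nr 1 A))"
proof -
  let ?centers = "{c. star_center c (rank_k_nr 1 A)}"
  have "real (CARD('m) + 1) < real (2 * khat)"
    using assms(2) by simp
  then have "CARD('m) + 1 < 2 * khat"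
    by (simp only: of_nat_less_iff)
  then have "rank_k_nr khat A \<subseteq> ?centers"
    using star_center_rank_1_nr[OF assms(1)] by blast
  then have hull: "convex hull (rank_k_nr khat A) \<subseteq> ?centers"
    by (intro hull_minimal convex_star_centers)
  moreover have "rank_k_nr khat A \<subseteq> convex hull (rank_k_nr khat A)"
    by (rule hull_subset)
  ultimately show ?thesis
    using assms(3) unfolding star_shaped_def star_center_def by blast
qed

end
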